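(* Let $0<\varepsilon\le 1$. Then every point of $i(0,\infty)=\{i s: s>0\}$ is an eigenvalue of $t$, and every point of $-i(0,\infty)=\{-is: s>0\}$ is an eigenvalue of $S_\varepsilon$. In particular, $t$ and $S_\varepsilon$ are unbounded operators.
   Context: Work in $L^2(\mathbb{R})$ with inner product $(f,g)=\int\overline{f(x)}g(x)\,dx$. Let $q$ be the self-adjoint multiplication operator $(qf)(x)=xf(x)$ on $D(q)=\{f\in L^2(\mathbb{R}): xf\in L^2(\mathbb{R})\}$ and $p=-i\,\frac{d}{dx}$ the self-adjoint momentum operator. Since $q$ is injective and self-adjoint, $q^{-1}$ is a (densely defined) self-adjoint operator. Define $t=q^{-1}p$ with domain $D(t)=\{f\in D(p): pf\in D(q^{-1})\}$. Let $L^2_0$ denote the subspace of even functions in $L^2(\mathbb{R})$. For $0<\varepsilon\le1$, define the operator $S_\varepsilon$ in $L^2_0$ by $D(S_\varepsilon)=\{f\in L^2_0\cap\bigcap_{n\ge0}D(t^{2n+1}) : \lim_{N\to\infty}\sum_{n=0}^N\frac{(-1)^n}{2n+1}(\sqrt{\varepsilon}\,t)^{2n+1}f \text{ exists in norm}\}$, $S_\varepsilon f=-\frac{1}{\sqrt\varepsilon}\sum_{n=0}^\infty\frac{(-1)^n}{2n+1}(\sqrt\varepsilon\,t)^{2n+1}f$ (formally $S_\varepsilon=-\varepsilon^{-1/2}\arctan(\sqrt\varepsilon\, t)$). *)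

theory Defs
  imports "HOL-Analysis.Analysis"
begin

text \<open>Elements of L^2(R) are represented by (Borel measurable) functions real => complex;
  operators are represented by their graphs, as relations between representatives
  (all relations below are invariant under a.e. equality).\<close>

definition L2 :: "(real \<Rightarrow> complex) \<Rightarrow> bool" where
  "L2 f \<longleftrightarrow> f \<in> borel_measurable lborel \<and> integrable lborel (\<lambda>x. (cmod (f x))\<^sup>2)"

definition L2_norm :: "(real \<Rightarrow> complex) \<Rightarrow> real" where
  "L2_norm f = sqrt (LINT x|lborel. (cmod (f x))\<^sup>2)"

definition ae_eq :: "(real \<Rightarrow> complex) \<Rightarrow> (real \<Rightarrow> complex) \<Rightarrow> bool" where
  "ae_eq f g \<longleftrightarrow> (AE x in lborel. f x = g x)"

definition vderiv :: "(real \<Rightarrow> complex) \<Rightarrow> real \<Rightarrow> complex" where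
  "vderiv g = (\<lambda>x. vector_derivative g (at x))"

definition test_function :: "(real \<Rightarrow> complex) \<Rightarrow> bool" where
  "test_function \<phi> \<longleftrightarrow> (\<forall>n x. (vderiv ^^ n) \<phi> differentiable (at x)) \<and> bounded {x. \<phi> x \<noteq> 0}"

text \<open>Self-adjoint momentum p = -i d/dx, domain H^1(R) (weak derivative in L^2).\<close>
definition p_op :: "(real \<Rightarrow> complex) \<Rightarrow> (real \<Rightarrow> complex) \<Rightarrow> bool" where
  "p_op f g \<longleftrightarrow> L2 f \<and> L2 g \<and>
     (\<forall>\<phi>. test_function \<phi> \<longrightarrow>
        (LINT x|lborel. f x * vderiv \<phi> x) = - (LINT x|lborel. (\<i> * g x) * \<phi> x))"

definition qinv_op :: "(real \<Rightarrow> complex) \<Rightarrow> (real \<Rightarrow> complex) \<Rightarrow> bool" where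
  "qinv_op g h \<longleftrightarrow> L2 g \<and> L2 h \<and> (AE x in lborel. h x = g x / complex_of_real x)"

definition t_op :: "(real \<Rightarrow> complex) \<Rightarrow> (real \<Rightarrow> complex) \<Rightarrow> bool" where
  "t_op f h \<longleftrightarrow> (\<exists>g. p_op f g \<and> qinv_op g h)"

fun t_pow :: "nat \<Rightarrow> (real \<Rightarrow> complex) \<Rightarrow> (real \<Rightarrow> complex) \<Rightarrow> bool" where
  "t_pow 0 f h \<longleftrightarrow> L2 f \<and> ae_eq f h"
| "t_pow (Suc n) f h \<longleftrightarrow> (\<exists>g. t_pow n f g \<and> t_op g h)"

definition even_fn :: "(real \<Rightarrow> complex) \<Rightarrow> bool" where
  "even_fn f \<longleftrightarrow> (AE x in lborel. f (- x) = f x)"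

text \<open>S_eps = - eps^{-1/2} arctan(sqrt eps t) on the even subspace L^2_0, defined by the
  norm-convergent series.\<close>
definition S_op :: "real \<Rightarrow> (real \<Rightarrow> complex) \<Rightarrow> (real \<Rightarrow> complex) \<Rightarrow> bool" where
  "S_op \<epsilon> f g \<longleftrightarrow> L2 f \<and> even_fn f \<and>
     (\<exists>u h. (\<forall>n. t_pow (2*n+1) f (u n)) \<and> L2 h \<and>
        (\<lambda>N. L2_norm (\<lambda>x. (\<Sum>n\<le>N. complex_of_real ((-1)^n / (2*n+1) * sqrt \<epsilon> ^ (2*n+1)) * u n x) - h x))
          \<longlonglongrightarrow> 0 \<and>
        L2 g \<and> ae_eq g (\<lambda>x. - complex_of_real (1 / sqrt \<epsilon>) * h x))"

definition is_eigenvalue :: "((real \<Rightarrow> complex) \<Rightarrow> (real \<Rightarrow> complex) \<Rightarrow> bool) \<Rightarrow> complex \<Rightarrow> bool" where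
  "is_eigenvalue T c \<longleftrightarrow> (\<exists>f. \<not> ae_eq f (\<lambda>_. 0) \<and> T f (\<lambda>x. c * f x))"

definition bounded_op :: "((real \<Rightarrow> complex) \<Rightarrow> (real \<Rightarrow> complex) \<Rightarrow> bool) \<Rightarrow> bool" where
  "bounded_op T \<longleftrightarrow> (\<exists>C. \<forall>f g. T f g \<longrightarrow> L2_norm g \<le> C * L2_norm f)"

end

theory Submission
  imports Defs "HOL-Probability.Distributions"
begin

text \<open>The Gaussian \<open>G\<^sub>a(x) = exp(-a x\<^sup>2/2)\<close> satisfies \<open>p G\<^sub>a = -i G\<^sub>a' = i a x G\<^sub>a\<close>, hence
  \<open>t G\<^sub>a = i a G\<^sub>a\<close>: every point of \<open>i(0,\<infinity>)\<close> is an eigenvalue of \<open>t\<close>. Then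
  \<open>(\<surd>\<epsilon> t)\<^bsup>2n+1\<^esup> G\<^sub>a = i (-1)\<^sup>n (\<surd>\<epsilon> a)\<^bsup>2n+1\<^esup> G\<^sub>a\<close>, so for \<open>r = \<surd>\<epsilon> a < 1\<close> the arctan series
  for \<open>S\<^sub>\<epsilon> G\<^sub>a\<close> becomes \<open>-i \<epsilon>\<^bsup>-1/2\<^esup> \<Sum> r\<^bsup>2n+1\<^esup>/(2n+1) G\<^sub>a = -i \<epsilon>\<^bsup>-1/2\<^esup> artanh r G\<^sub>a\<close>.
  Choosing \<open>r = tanh (\<surd>\<epsilon> s)\<close> produces the eigenvalue \<open>-i s\<close>. Unbounded eigenvalues
  rule out boundedness.\<close>

lemma L2_scale: "L2 f \<Longrightarrow> L2 (\<lambda>x. c * f x)"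
  unfolding L2_def by (auto simp: norm_mult power_mult_distrib)

lemma L2_norm_scale: "L2_norm (\<lambda>x. c * f x) = cmod c * L2_norm f"
  unfolding L2_norm_def by (simp add: norm_mult power_mult_distrib real_sqrt_mult)

lemma L2_norm_pos:
  assumes "L2 f" and "\<not> ae_eq f (\<lambda>_. 0)"
  shows "L2_norm f > 0"
proof -
  have "(LINT x|lborel. (cmod (f x))\<^sup>2) \<noteq> 0"
    using assms by (simp add: L2_def ae_eq_def integral_nonneg_eq_0_iff_AE)
  moreover have "(LINT x|lborel. (cmod (f x))\<^sup>2) \<ge> 0"
    by (simp add: integral_nonneg_AE)
  ultimately show ?thesis
    unfolding L2_norm_def by (simp add: order_neq_le_trans)
qed

lemma nowhere_zero_not_ae_eq_zero:
  assumes "\<And>x. f x \<noteq> 0"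
  shows "\<not> ae_eq f (\<lambda>_. 0)"
proof
  assume "ae_eq f (\<lambda>_. 0)"
  then have "AE x in (lborel :: real measure). False"
    using assms by (simp add: ae_eq_def)
  then show False
    using ae_filter_eq_bot_iff[of "lborel :: real measure"] by (simp add: trivial_limit_def)
qed

lemma not_bounded_op_if_eigenvalues_unbounded:
  assumes "\<And>C. \<exists>\<mu> f. C < cmod \<mu> \<and> L2_norm f > 0 \<and> T f (\<lambda>x. \<mu> * f x)"
  shows "\<not> bounded_op T"
proof
  assume "bounded_op T"
  then obtain C where C: "\<And>f g. T f g \<Longrightarrow> L2_norm g \<le> C * L2_norm f"
    unfolding bounded_op_def by blast
  obtain \<mu> f where "C < cmod \<mu>" "L2_norm f > 0" "T f (\<lambda>x. \<mu> * f x)"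
    using assms by blast
  then have "C * L2_norm f < L2_norm (\<lambda>x. \<mu> * f x)"
    by (simp add: L2_norm_scale)
  then show False
    using C \<open>T f (\<lambda>x. \<mu> * f x)\<close> by fastforce
qed

lemma test_function_has_vector_derivative:
  assumes "test_function \<phi>"
  shows "(\<phi> has_vector_derivative vderiv \<phi> x) (at x)"
  using assms vector_derivative_works
  unfolding test_function_def vderiv_def by (metis funpow_0)

lemma test_function_continuous_on:
  assumes "test_function \<phi>"
  shows "continuous_on UNIV \<phi>" "continuous_on UNIV (vderiv \<phi>)"
proof -
  have "(vderiv ^^ 0) \<phi> differentiable (at x)" "(vderiv ^^ 1) \<phi> differentiable (at x)" for x
    using assms unfolding test_function_def by blast+
  then show "continuous_on UNIV \<phi>" "continuous_on UNIV (vderiv \<phi>)"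
    by (auto simp: continuous_at_imp_continuous_on differentiable_imp_continuous_within)
qed

lemma test_function_support:
  assumes "test_function \<phi>"
  obtains R where "R > 0" "\<And>x. R \<le> \<bar>x\<bar> \<Longrightarrow> \<phi> x = 0 \<and> vderiv \<phi> x = 0"
proof -
  obtain R where R: "R > 0" "\<And>x. \<phi> x \<noteq> 0 \<Longrightarrow> \<bar>x\<bar> \<le> R"
    using assms unfolding test_function_def bounded_pos by auto
  have "vderiv \<phi> x = 0" if "R < \<bar>x\<bar>" for x
  proof -
    have "open {y :: real. R < \<bar>y\<bar>}"
      by (intro open_Collect_less continuous_intros)
    moreover have "\<phi> y = 0" if "y \<in> {y. R < \<bar>y\<bar>}" for y
      using R(2) that by fastforce
    ultimately have "(\<phi> has_vector_derivative 0) (at x)"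
      using has_vector_derivative_transform_within_open[OF has_vector_derivative_const, of _ x] that
      by (metis mem_Collect_eq)
    then show ?thesis
      unfolding vderiv_def by (rule vector_derivative_at)
  qed
  moreover have "\<phi> x = 0" if "R < \<bar>x\<bar>" for x
    using R(2) that by fastforce
  ultimately have "\<phi> x = 0 \<and> vderiv \<phi> x = 0" if "R + 1 \<le> \<bar>x\<bar>" for x
    using that by simp
  with R(1) show ?thesis
    by (intro that[of "R + 1"]) simp_all
qed

lemma integrable_continuous_compact_support:
  fixes f :: "real \<Rightarrow> complex"
  assumes "continuous_on UNIV f" and "\<And>x. R \<le> \<bar>x\<bar> \<Longrightarrow> f x = 0"
  shows "integrable lborel f"
proof -
  have "integrable lborel (\<lambda>x. indicator {-R..R} x *\<^sub>R f x)"
    by (rule borel_integrable_compact) (auto intro: continuous_on_subset[OF assms(1)])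
  also have "(\<lambda>x. indicator {-R..R} x *\<^sub>R f x) = f"
    using assms(2) by (force simp: indicator_def)
  finally show ?thesis .
qed

lemma integral_derivative_compact_support:
  fixes g D :: "real \<Rightarrow> complex"
  assumes "\<And>x. (g has_vector_derivative D x) (at x)" "integrable lborel D"
    and "R \<ge> 0" "\<And>x. R \<le> \<bar>x\<bar> \<Longrightarrow> g x = 0 \<and> D x = 0"
  shows "(LINT x|lborel. D x) = 0"
proof -
  have "(g has_vector_derivative D x) (at x within {-R..R})" for x
    using assms(1) by (rule has_vector_derivative_at_within)
  then have "(D has_integral g R - g (-R)) {-R..R}"
    using fundamental_theorem_of_calculus[of "-R" R g D] assms(3) by simp
  moreover have "g R = 0" "g (-R) = 0"
    using assms(3) assms(4)[of R] assms(4)[of "-R"] by simp_all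
  ultimately have "(D has_integral 0) {-R..R}"
    by simp
  moreover have "D x = 0" if "x \<notin> {-R..R}" for x
  proof -
    have "R \<le> \<bar>x\<bar>"
      using that by auto
    then show ?thesis
      using assms(4) by blast
  qed
  ultimately have "(D has_integral 0) UNIV"
    by (rule has_integral_on_superset) simp_all
  with has_integral_integral_lborel[OF assms(2)] show ?thesis
    using has_integral_unique by blast
qed

lemma integration_by_parts_test_function:
  fixes f f' :: "real \<Rightarrow> complex"
  assumes f': "\<And>x. (f has_vector_derivative f' x) (at x)" "continuous_on UNIV f'"
    and \<phi>: "test_function \<phi>"
  shows "(LINT x|lborel. f x * vderiv \<phi> x) = - (LINT x|lborel. f' x * \<phi> x)"
proof -
  obtain R where R: "R > 0" "\<And>x. R \<le> \<bar>x\<bar> \<Longrightarrow> \<phi> x = 0 \<and> vderiv \<phi> x = 0"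
    using test_function_support[OF \<phi>] by blast
  have "continuous_on UNIV f"
    using f'(1) by (meson continuous_at_imp_continuous_on has_vector_derivative_continuous)
  then have cont: "continuous_on UNIV (\<lambda>x. f x * vderiv \<phi> x)" "continuous_on UNIV (\<lambda>x. f' x * \<phi> x)"
    using f'(2) test_function_continuous_on[OF \<phi>] by (auto intro: continuous_on_mult)
  have supp: "f x * vderiv \<phi> x = 0" "f' x * \<phi> x = 0" if "R \<le> \<bar>x\<bar>" for x
    using R(2)[OF that] by simp_all
  have int: "integrable lborel (\<lambda>x. f x * vderiv \<phi> x)" "integrable lborel (\<lambda>x. f' x * \<phi> x)"
    using integrable_continuous_compact_support[OF cont(1) supp(1)]
      integrable_continuous_compact_support[OF cont(2) supp(2)] by blast+
  have "(LINT x|lborel. f x * vderiv \<phi> x + f' x * \<phi> x) = 0"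
  proof (rule integral_derivative_compact_support[where R = R])
    show "((\<lambda>x. f x * \<phi> x) has_vector_derivative f x * vderiv \<phi> x + f' x * \<phi> x) (at x)" for x
      by (rule has_vector_derivative_mult[OF f'(1) test_function_has_vector_derivative[OF \<phi>]])
    show "integrable lborel (\<lambda>x. f x * vderiv \<phi> x + f' x * \<phi> x)"
      using int by simp
    show "f x * \<phi> x = 0 \<and> f x * vderiv \<phi> x + f' x * \<phi> x = 0" if "R \<le> \<bar>x\<bar>" for x
      using R(2)[OF that] by simp
  qed (use R(1) in simp)
  then show ?thesis
    using int by (simp add: eq_neg_iff_add_eq_0)
qed

lemma p_op_of_derivative:
  assumes "\<And>x. (f has_vector_derivative f' x) (at x)" "continuous_on UNIV f'"
    and "L2 f" "L2 f'"
  shows "p_op f (\<lambda>x. - \<i> * f' x)"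
  unfolding p_op_def
  using assms L2_scale[OF assms(4), of "- \<i>"] integration_by_parts_test_function[OF assms(1,2)]
  by simp

lemma qinv_op_mult_x:
  assumes "L2 h" "L2 (\<lambda>x. of_real x * h x)"
  shows "qinv_op (\<lambda>x. of_real x * h x) h"
proof -
  have "AE x in lborel. h x = of_real x * h x / of_real x"
    using AE_lborel_singleton[of 0] by eventually_elim simp
  then show ?thesis
    unfolding qinv_op_def using assms by simp
qed

lemma artanh_series:
  fixes r :: real
  assumes "\<bar>r\<bar> < 1"
  shows "(\<lambda>n. r ^ (2 * n + 1) / real (2 * n + 1)) sums artanh r"
proof -
  define x where "x = (1 + r) / (1 - r)"
  have "x > 0" "(x - 1) / (x + 1) = r"
    using assms by (auto simp: x_def field_simps)
  then have "(\<lambda>n. 2 * r ^ (2 * n + 1) / real (2 * n + 1)) sums ln x"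
    using ln_series_quadratic[of x] by simp
  then have "(\<lambda>n. 2 * r ^ (2 * n + 1) / real (2 * n + 1) / 2) sums (ln x / 2)"
    by (rule sums_divide)
  also have "(\<lambda>n. 2 * r ^ (2 * n + 1) / real (2 * n + 1) / 2) = (\<lambda>n. r ^ (2 * n + 1) / real (2 * n + 1))"
    by (simp add: fun_eq_iff field_simps)
  finally show ?thesis
    unfolding artanh_def x_def .
qed

definition gaussian :: "real \<Rightarrow> real \<Rightarrow> complex" where
  "gaussian a x = of_real (exp (-(a * x\<^sup>2) / 2))"

lemma exp_neg_sq_eq_normal_density:
  fixes a :: real
  assumes "a > 0"
  shows "exp (-(a * x\<^sup>2)) = sqrt (pi / a) * normal_density 0 (sqrt (1 / (2 * a))) x"
  using assms by (simp add: normal_density_def real_sqrt_divide field_simps)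

lemma integrable_exp_neg_sq_moment:
  fixes a :: real
  assumes "a > 0"
  shows "integrable lborel (\<lambda>x. exp (-(a * x\<^sup>2)) * x ^ k)"
proof -
  have "integrable lborel
      (\<lambda>x. sqrt (pi / a) * (normal_density 0 (sqrt (1 / (2 * a))) x * (x - 0) ^ k))"
    using assms by (intro integrable_mult_right integrable_normal_moment) simp
  then show ?thesis
    by (simp add: exp_neg_sq_eq_normal_density[OF assms] mult.assoc)
qed

lemma cmod_gaussian_sq: "(cmod (gaussian a x))\<^sup>2 = exp (-(a * x\<^sup>2))"
  by (simp add: gaussian_def power2_eq_square exp_add[symmetric])

lemma continuous_on_gaussian: "continuous_on UNIV (gaussian a)"
  unfolding gaussian_def by (intro continuous_intros) simp

lemma L2_gaussian:
  assumes "a > 0"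
  shows "L2 (gaussian a)"
  unfolding L2_def cmod_gaussian_sq
  using integrable_exp_neg_sq_moment[OF assms, of 0] borel_measurable_continuous_onI[OF continuous_on_gaussian]
  by simp

lemma L2_x_gaussian:
  assumes "a > 0"
  shows "L2 (\<lambda>x. of_real x * gaussian a x)"
proof -
  have "continuous_on UNIV (\<lambda>x. of_real x * gaussian a x)"
    by (intro continuous_intros continuous_on_gaussian)
  then show ?thesis
    unfolding L2_def norm_mult power_mult_distrib cmod_gaussian_sq
    using integrable_exp_neg_sq_moment[OF assms, of 2]
    by (simp add: borel_measurable_continuous_onI mult.commute)
qed

lemma gaussian_has_vector_derivative:
  "(gaussian a has_vector_derivative - of_real (a * x) * gaussian a x) (at x)"
proof -
  have "((\<lambda>x. exp (-(a * x\<^sup>2) / 2)) has_real_derivative exp (-(a * x\<^sup>2) / 2) * -(a * x)) (at x)"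
    by (auto intro!: derivative_eq_intros)
  from has_vector_derivative_of_real[OF this] show ?thesis
    unfolding gaussian_def by (simp add: mult.commute)
qed

lemma gaussian_nonzero: "\<not> ae_eq (gaussian a) (\<lambda>_. 0)"
  by (rule nowhere_zero_not_ae_eq_zero) (simp add: gaussian_def)

lemma eigenvalue_ray_and_not_bounded_op:
  assumes "cmod c = 1"
    and "\<And>s. s > 0 \<Longrightarrow> \<exists>a>0. T (gaussian a) (\<lambda>x. c * of_real s * gaussian a x)"
  shows "(\<forall>s>0. is_eigenvalue T (c * of_real s)) \<and> \<not> bounded_op T"
proof (intro conjI allI impI)
  show "is_eigenvalue T (c * of_real s)" if "s > 0" for s
    using assms(2)[OF that] gaussian_nonzero unfolding is_eigenvalue_def by blast
  show "\<not> bounded_op T"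
  proof (rule not_bounded_op_if_eigenvalues_unbounded)
    fix C :: real
    have "\<bar>C\<bar> + 1 > 0"
      by simp
    then obtain a where "a > 0" "T (gaussian a) (\<lambda>x. c * of_real (\<bar>C\<bar> + 1) * gaussian a x)"
      using assms(2) by blast
    moreover have "C < cmod (c * of_real (\<bar>C\<bar> + 1))"
      using assms(1) by (simp add: norm_mult)
    ultimately show "\<exists>\<mu> f. C < cmod \<mu> \<and> L2_norm f > 0 \<and> T f (\<lambda>x. \<mu> * f x)"
      using L2_norm_pos[OF L2_gaussian gaussian_nonzero] by blast
  qed
qed

lemma t_op_gaussian:
  assumes "a > 0"
  shows "t_op (\<lambda>x. c * gaussian a x) (\<lambda>x. \<i> * of_real a * (c * gaussian a x))"
proof -
  define h where "h x = \<i> * of_real a * (c * gaussian a x)" for x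
  define f' where "f' x = - (c * of_real a) * (of_real x * gaussian a x)" for x
  have "((\<lambda>x. c * gaussian a x) has_vector_derivative f' x) (at x)" for x
    using has_vector_derivative_mult_right[OF gaussian_has_vector_derivative, of c a x]
    by (simp add: f'_def mult_ac)
  moreover have "continuous_on UNIV f'"
    unfolding f'_def by (intro continuous_intros continuous_on_gaussian)
  moreover have "L2 (\<lambda>x. c * gaussian a x)"
    by (rule L2_scale[OF L2_gaussian[OF assms]])
  moreover have "L2 f'"
    unfolding f'_def by (rule L2_scale[OF L2_x_gaussian[OF assms]])
  ultimately have "p_op (\<lambda>x. c * gaussian a x) (\<lambda>x. - \<i> * f' x)"
    by (rule p_op_of_derivative)
  also have "(\<lambda>x. - \<i> * f' x) = (\<lambda>x. of_real x * h x)"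
    by (simp add: h_def f'_def fun_eq_iff mult_ac)
  finally have "p_op (\<lambda>x. c * gaussian a x) (\<lambda>x. of_real x * h x)" .
  moreover have "qinv_op (\<lambda>x. of_real x * h x) h"
    using L2_scale[OF L2_gaussian[OF assms], of "\<i> * of_real a * c"]
      L2_scale[OF L2_x_gaussian[OF assms], of "\<i> * of_real a * c"]
    by (intro qinv_op_mult_x) (simp_all add: h_def mult_ac)
  ultimately show ?thesis
    unfolding t_op_def h_def by blast
qed

lemma t_pow_gaussian:
  assumes "a > 0"
  shows "t_pow n (\<lambda>x. c * gaussian a x) (\<lambda>x. (\<i> * of_real a) ^ n * (c * gaussian a x))"
proof (induction n)
  case 0
  then show ?case
    using assms by (simp add: L2_scale L2_gaussian ae_eq_def)
next
  case (Suc n)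
  have "t_op (\<lambda>x. ((\<i> * of_real a) ^ n * c) * gaussian a x)
      (\<lambda>x. \<i> * of_real a * (((\<i> * of_real a) ^ n * c) * gaussian a x))"
    by (rule t_op_gaussian[OF assms])
  then have "t_op (\<lambda>x. (\<i> * of_real a) ^ n * (c * gaussian a x))
      (\<lambda>x. (\<i> * of_real a) ^ Suc n * (c * gaussian a x))"
    by (simp add: mult.assoc)
  with Suc show ?case
    by auto
qed

lemma arctan_series_term:
  fixes \<epsilon> a :: real
  shows "complex_of_real ((-1) ^ n / real (2 * n + 1) * sqrt \<epsilon> ^ (2 * n + 1)) * (\<i> * of_real a) ^ (2 * n + 1)
       = \<i> * of_real ((sqrt \<epsilon> * a) ^ (2 * n + 1) / real (2 * n + 1))"
proof -
  have "\<i> ^ (2 * n + 1) = \<i> * (-1) ^ n"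
    by (simp add: power_mult)
  then have "(\<i> * complex_of_real a) ^ (2 * n + 1) = \<i> * (-1) ^ n * of_real (a ^ (2 * n + 1))"
    by (simp add: power_mult_distrib)
  moreover have "((-1) ^ n * (-1) ^ n :: complex) = 1"
    by (simp add: power_mult_distrib[symmetric])
  ultimately show ?thesis
    by (simp add: field_simps)
qed

lemma arctan_series_partial_sum:
  fixes \<epsilon> a :: real and g :: complex
  shows "(\<Sum>n\<le>N. complex_of_real ((-1) ^ n / real (2 * n + 1) * sqrt \<epsilon> ^ (2 * n + 1))
            * ((\<i> * of_real a) ^ (2 * n + 1) * g))
       = \<i> * of_real (\<Sum>n\<le>N. (sqrt \<epsilon> * a) ^ (2 * n + 1) / real (2 * n + 1)) * g"
proof -
  have "(\<Sum>n\<le>N. complex_of_real ((-1) ^ n / real (2 * n + 1) * sqrt \<epsilon> ^ (2 * n + 1))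
            * ((\<i> * of_real a) ^ (2 * n + 1) * g))
      = (\<Sum>n\<le>N. \<i> * of_real ((sqrt \<epsilon> * a) ^ (2 * n + 1) / real (2 * n + 1)) * g)"
    by (simp only: mult.assoc[symmetric] arctan_series_term)
  also have "\<dots> = \<i> * of_real (\<Sum>n\<le>N. (sqrt \<epsilon> * a) ^ (2 * n + 1) / real (2 * n + 1)) * g"
    by (simp add: sum_distrib_left sum_distrib_right)
  finally show ?thesis .
qed

lemma S_op_gaussian:
  assumes "\<epsilon> > 0" "a > 0" "sqrt \<epsilon> * a < 1"
  shows "S_op \<epsilon> (gaussian a) (\<lambda>x. - \<i> * of_real (artanh (sqrt \<epsilon> * a) / sqrt \<epsilon>) * gaussian a x)"
proof -
  define r where "r = sqrt \<epsilon> * a"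
  define P where "P N = (\<Sum>n\<le>N. r ^ (2 * n + 1) / real (2 * n + 1))" for N
  define u where "u n = (\<lambda>x. (\<i> * of_real a) ^ (2 * n + 1) * gaussian a x)" for n
  define h where "h x = \<i> * of_real (artanh r) * gaussian a x" for x
  have "r > 0" "r < 1"
    using assms by (simp_all add: r_def)
  then have "P \<longlonglongrightarrow> artanh r"
    unfolding P_def using artanh_series[of r] by (simp add: sums_def_le)
  then have "(\<lambda>N. \<bar>P N - artanh r\<bar> * L2_norm (gaussian a)) \<longlonglongrightarrow> 0"
    by (auto intro!: tendsto_eq_intros)
  moreover have "(\<lambda>x. (\<Sum>n\<le>N. complex_of_real ((-1) ^ n / real (2 * n + 1) * sqrt \<epsilon> ^ (2 * n + 1)) * u n x) - h x)
      = (\<lambda>x. (\<i> * of_real (P N - artanh r)) * gaussian a x)" for N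
    unfolding u_def arctan_series_partial_sum by (simp add: fun_eq_iff h_def P_def r_def algebra_simps)
  ultimately have "(\<lambda>N. L2_norm (\<lambda>x. (\<Sum>n\<le>N. complex_of_real ((-1) ^ n / real (2 * n + 1)
      * sqrt \<epsilon> ^ (2 * n + 1)) * u n x) - h x)) \<longlonglongrightarrow> 0"
    by (simp add: L2_norm_scale norm_mult del: of_real_diff)
  moreover have "t_pow (2 * n + 1) (gaussian a) (u n)" for n
    using t_pow_gaussian[OF assms(2), of "2 * n + 1" 1] by (simp only: u_def mult_1_left mult_1_right)
  moreover have "ae_eq (\<lambda>x. - \<i> * of_real (artanh r / sqrt \<epsilon>) * gaussian a x)
      (\<lambda>x. - complex_of_real (1 / sqrt \<epsilon>) * h x)"
    by (simp add: ae_eq_def h_def)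
  moreover have "even_fn (gaussian a)"
    by (simp add: even_fn_def gaussian_def)
  ultimately show ?thesis
    unfolding S_op_def r_def[symmetric] h_def
    using L2_gaussian[OF assms(2)] L2_scale[OF L2_gaussian[OF assms(2)]] by blast
qed

lemma S_op_gaussian_eigenfunction:
  assumes "\<epsilon> > 0" "s > 0"
  shows "\<exists>a>0. S_op \<epsilon> (gaussian a) (\<lambda>x. - \<i> * of_real s * gaussian a x)"
proof -
  define a where "a = tanh (sqrt \<epsilon> * s) / sqrt \<epsilon>"
  have "sqrt \<epsilon> * a = tanh (sqrt \<epsilon> * s)"
    using assms(1) by (simp add: a_def)
  moreover have "a > 0"
    using assms by (simp add: a_def)
  ultimately have "S_op \<epsilon> (gaussian a) (\<lambda>x. - \<i> * of_real (sqrt \<epsilon> * s / sqrt \<epsilon>) * gaussian a x)"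
    using S_op_gaussian[OF assms(1), of a] tanh_real_lt_1 by (simp add: artanh_tanh_real)
  with \<open>a > 0\<close> show ?thesis
    using assms(1) by auto
qed

theorem theorem3p3:
  fixes \<epsilon> :: real
  assumes "0 < \<epsilon>" and "\<epsilon> \<le> 1"
  shows "(\<forall>s>0. is_eigenvalue t_op (\<i> * complex_of_real s))
       \<and> (\<forall>s>0. is_eigenvalue (S_op \<epsilon>) (- \<i> * complex_of_real s))
       \<and> \<not> bounded_op t_op \<and> \<not> bounded_op (S_op \<epsilon>)"
proof -
  have "\<exists>a>0. t_op (gaussian a) (\<lambda>x. \<i> * of_real s * gaussian a x)" if "s > 0" for s
    using that t_op_gaussian[OF that, of 1] by auto
  then have "(\<forall>s>0. is_eigenvalue t_op (\<i> * complex_of_real s)) \<and> \<not> bounded_op t_op"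
    by (intro eigenvalue_ray_and_not_bounded_op) simp_all
  moreover have "(\<forall>s>0. is_eigenvalue (S_op \<epsilon>) (- \<i> * complex_of_real s)) \<and> \<not> bounded_op (S_op \<epsilon>)"
    using S_op_gaussian_eigenfunction[OF assms(1)] by (intro eigenvalue_ray_and_not_bounded_op) simp_all
  ultimately show ?thesis
    by blast
qed

end
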